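(* Fix an event set $\hat\Sigma$, a function $\hat\Sigma_{uc}:\hat\Sigma\to NCFD$, and a bi-fuzzy language $\hat M$ with $pr(\hat M)=\hat M$; controllability below is with respect to $\hat M$ and $\hat\Sigma_{uc}$. Let $\hat K_1,\hat K_2$ be bi-fuzzy languages over $\hat\Sigma$. Then: 1) if $\hat K_1$ and $\hat K_2$ are bi-fuzzy controllable, then $\hat K_1\cup\hat K_2$ is bi-fuzzy controllable; 2) if $pr(\hat K_1)=\hat K_1$ and $pr(\hat K_2)=\hat K_2$, then $pr(\hat K_1\cup\hat K_2)=\hat K_1\cup\hat K_2$; 3) if $\hat K_1$ and $\hat K_2$ are bi-fuzzy controllable and $pr(\hat K_1)\cap pr(\hat K_2)=pr(\hat K_1\cap\hat K_2)$, then $\hat K_1\cap\hat K_2$ is bi-fuzzy controllable; 4) if $pr(\hat K_i)=\hat K_i$ and $\hat K_i$ is bi-fuzzy controllable for $i=1,2$, then $pr(\hat K_1)\cap pr(\hat K_2)=pr(\hat K_1\cap\hat K_2)$ and $\hat K_1\cap\hat K_2$ is bi-fuzzy controllable.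
   Context: $NCFD$ is the set of normal convex type-1 fuzzy sets $\mu:[0,1]\to[0,1]$ ($\max_u\mu(u)=1$, and $\mu(u_j)\ge\min\{\mu(u_i),\mu(u_k)\}$ for $u_i\le u_j\le u_k$). Operations: $(\mu_1\sqcup\mu_2)(v)=\sup\{\min(\mu_1(u),\mu_2(w)):\max(u,w)=v\}$, $(\mu_1\sqcap\mu_2)(v)=\sup\{\min(\mu_1(u),\mu_2(w)):\min(u,w)=v\}$; for arbitrary families, $(\bigsqcup_{i\in I}\mu_i)(v)=\sup\{\inf_i\mu_i(u_i):\sup_i u_i=v\}$. $\mu_1\sqsubseteq\mu_2$ iff $\mu_1\sqcap\mu_2=\mu_1$. A bi-fuzzy language over $\hat\Sigma$ is a function $\hat\Sigma^*\to NCFD$; $(\hat L\cap\hat H)(s)=\hat L(s)\sqcap\hat H(s)$, $(\hat L\cup\hat H)(s)=\hat L(s)\sqcup\hat H(s)$, $\hat L\subseteq\hat H$ iff $\hat L(s)\sqsubseteq\hat H(s)$ for all $s$. Prefix closure: $pr(\hat K)(s)=\bigsqcup_{u\in\hat\Sigma^*}\hat K(su)$. A bi-fuzzy language $\hat K$ with $\hat K\subseteq\hat M$ is bi-fuzzy controllable (w.r.t. $\hat M$ and $\hat\Sigma_{uc}$) if for all $s\in\hat\Sigma^*$, $\sigma\in\hat\Sigma$: $pr(\hat K)(s)\sqcap\hat\Sigma_{uc}(\sigma)\sqcap\hat M(s\sigma)\sqsubseteq pr(\hat K)(s\sigma)$. *)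

theory Defs
  imports Main "HOL.Real"
begin

text \<open>A type-1 fuzzy set on [0,1] is represented as a function real => real;
  by convention it is 0 outside the unit interval.\<close>

type_synonym fuzzy = "real \<Rightarrow> real"

definition unit_iv :: "real set" where "unit_iv = {0..1}"

definition NCFD :: "fuzzy set" where
  "NCFD = {\<mu>. (\<forall>u. u \<notin> unit_iv \<longrightarrow> \<mu> u = 0)
             \<and> (\<forall>u \<in> unit_iv. 0 \<le> \<mu> u \<and> \<mu> u \<le> 1)
             \<and> (\<exists>u \<in> unit_iv. \<mu> u = 1)
             \<and> (\<forall>ui \<in> unit_iv. \<forall>uj \<in> unit_iv. \<forall>uk \<in> unit_iv.
                   ui \<le> uj \<and> uj \<le> uk \<longrightarrow> \<mu> uj \<ge> min (\<mu> ui) (\<mu> uk))}"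

definition fjoin :: "fuzzy \<Rightarrow> fuzzy \<Rightarrow> fuzzy" where
  "fjoin \<mu>1 \<mu>2 = (\<lambda>v. if v \<in> unit_iv then
      Sup {min (\<mu>1 u) (\<mu>2 w) | u w. u \<in> unit_iv \<and> w \<in> unit_iv \<and> max u w = v} else 0)"

definition fmeet :: "fuzzy \<Rightarrow> fuzzy \<Rightarrow> fuzzy" where
  "fmeet \<mu>1 \<mu>2 = (\<lambda>v. if v \<in> unit_iv then
      Sup {min (\<mu>1 u) (\<mu>2 w) | u w. u \<in> unit_iv \<and> w \<in> unit_iv \<and> min u w = v} else 0)"

definition fJoin :: "('i \<Rightarrow> fuzzy) \<Rightarrow> fuzzy" where
  "fJoin F = (\<lambda>v. if v \<in> unit_iv then
      Sup {Inf (range (\<lambda>i. F i (x i))) | x. (\<forall>i. x i \<in> unit_iv) \<and> Sup (range x) = v} else 0)"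

definition fle :: "fuzzy \<Rightarrow> fuzzy \<Rightarrow> bool" where
  "fle \<mu>1 \<mu>2 \<longleftrightarrow> fmeet \<mu>1 \<mu>2 = \<mu>1"

type_synonym 'a bflang = "'a list \<Rightarrow> fuzzy"

definition is_bflang :: "'a bflang \<Rightarrow> bool" where
  "is_bflang L \<longleftrightarrow> (\<forall>s. L s \<in> NCFD)"

definition bf_inter :: "'a bflang \<Rightarrow> 'a bflang \<Rightarrow> 'a bflang" where
  "bf_inter L H = (\<lambda>s. fmeet (L s) (H s))"

definition bf_union :: "'a bflang \<Rightarrow> 'a bflang \<Rightarrow> 'a bflang" where
  "bf_union L H = (\<lambda>s. fjoin (L s) (H s))"

definition bf_subset :: "'a bflang \<Rightarrow> 'a bflang \<Rightarrow> bool" where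
  "bf_subset L H \<longleftrightarrow> (\<forall>s. fle (L s) (H s))"

definition pr :: "'a bflang \<Rightarrow> 'a bflang" where
  "pr K = (\<lambda>s. fJoin (\<lambda>u :: 'a list. K (s @ u)))"

definition bf_controllable :: "'a bflang \<Rightarrow> 'a bflang \<Rightarrow> ('a \<Rightarrow> fuzzy) \<Rightarrow> bool" where
  "bf_controllable K M Sig_uc \<longleftrightarrow> bf_subset K M \<and>
     (\<forall>s \<sigma>. fle (fmeet (fmeet (pr K s) (Sig_uc \<sigma>)) (M (s @ [\<sigma>]))) (pr K (s @ [\<sigma>])))"

end

theory Submission
  imports Defs
begin

text \<open>A normal convex fuzzy set \<open>f\<close> is the pointwise minimum of its envelopes
  \<open>f\<^sup>L v = sup {f u | u \<le> v}\<close> (nondecreasing) and \<open>f\<^sup>R v = sup {f u | u \<ge> v}\<close> (nonincreasing),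
  and the envelopes turn the fuzzy operations into pointwise ones on reals:
  \<open>(f \<sqinter> g)\<^sup>L = max f\<^sup>L g\<^sup>L\<close>, \<open>(f \<sqinter> g)\<^sup>R = min f\<^sup>R g\<^sup>R\<close>, \<open>(f \<squnion> g)\<^sup>L = min f\<^sup>L g\<^sup>L\<close>,
  \<open>(f \<squnion> g)\<^sup>R = max f\<^sup>R g\<^sup>R\<close>, and \<open>f \<sqsubseteq> g\<close> iff \<open>g\<^sup>L \<le> f\<^sup>L\<close> and \<open>f\<^sup>R \<le> g\<^sup>R\<close>.
  Hence \<open>NCFD\<close> is a distributive lattice, and the controllability inequalities for
  \<open>K\<^sub>1 \<union> K\<^sub>2\<close> and \<open>K\<^sub>1 \<inter> K\<^sub>2\<close> follow from those for \<open>K\<^sub>1\<close> and \<open>K\<^sub>2\<close>.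
  Prefix closure is an infinite join; it distributes over binary joins, so
  \<open>pr (K\<^sub>1 \<union> K\<^sub>2) = pr K\<^sub>1 \<union> pr K\<^sub>2\<close>. For prefix-closed languages,
  \<open>pr (K\<^sub>1 \<inter> K\<^sub>2) s\<close> lies above its term \<open>K\<^sub>1 s \<sqinter> K\<^sub>2 s\<close> (the empty suffix) and, joins
  being monotone, below \<open>pr K\<^sub>1 s \<sqinter> pr K\<^sub>2 s = K\<^sub>1 s \<sqinter> K\<^sub>2 s\<close>.\<close>

lemma in_unit_iv_iff [simp]: "u \<in> unit_iv \<longleftrightarrow> 0 \<le> u \<and> u \<le> (1::real)"
  by (simp add: unit_iv_def)

lemma NCFD_zero:
  "f \<in> NCFD \<Longrightarrow> \<not> (0 \<le> u \<and> u \<le> 1) \<Longrightarrow> f u = 0"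
  unfolding NCFD_def by auto

lemma NCFD_bounds:
  "f \<in> NCFD \<Longrightarrow> 0 \<le> u \<Longrightarrow> u \<le> 1 \<Longrightarrow> 0 \<le> f u \<and> f u \<le> 1"
  unfolding NCFD_def by auto

lemma NCFD_normalE:
  assumes "f \<in> NCFD"
  obtains p where "0 \<le> p" "p \<le> 1" "f p = 1"
  using assms unfolding NCFD_def by auto

lemma NCFD_convex:
  "f \<in> NCFD \<Longrightarrow> 0 \<le> a \<Longrightarrow> a \<le> b \<Longrightarrow> b \<le> c \<Longrightarrow> c \<le> 1 \<Longrightarrow> min (f a) (f c) \<le> f b"
  unfolding NCFD_def by auto

text \<open>Walker and Walker's \<open>f\<^sup>L\<close> and \<open>f\<^sup>R\<close>: on \<open>[0, 1]\<close>, the least nondecreasing and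
  the least nonincreasing function above \<open>f\<close>.\<close>

definition fL :: "fuzzy \<Rightarrow> fuzzy" where
  "fL f v = Sup {f u | u. u \<in> unit_iv \<and> u \<le> v}"

definition fR :: "fuzzy \<Rightarrow> fuzzy" where
  "fR f v = Sup {f u | u. u \<in> unit_iv \<and> v \<le> u}"

lemma fL_upper: "f \<in> NCFD \<Longrightarrow> 0 \<le> u \<Longrightarrow> u \<le> v \<Longrightarrow> v \<le> 1 \<Longrightarrow> f u \<le> fL f v"
  unfolding fL_def
  by (rule cSup_upper) (auto dest: NCFD_bounds intro!: bdd_aboveI[of _ 1])

lemma fR_upper: "f \<in> NCFD \<Longrightarrow> 0 \<le> v \<Longrightarrow> v \<le> u \<Longrightarrow> u \<le> 1 \<Longrightarrow> f u \<le> fR f v"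
  unfolding fR_def
  by (rule cSup_upper) (auto dest: NCFD_bounds intro!: bdd_aboveI[of _ 1])

lemma fL_least: "0 \<le> v \<Longrightarrow> (\<And>u. 0 \<le> u \<Longrightarrow> u \<le> v \<Longrightarrow> f u \<le> c) \<Longrightarrow> fL f v \<le> c"
  unfolding fL_def by (rule cSup_least) force+

lemma fR_least: "v \<le> 1 \<Longrightarrow> (\<And>u. v \<le> u \<Longrightarrow> u \<le> 1 \<Longrightarrow> f u \<le> c) \<Longrightarrow> fR f v \<le> c"
  unfolding fR_def by (rule cSup_least) force+

lemma fL_peak:
  assumes f: "f \<in> NCFD" and p: "0 \<le> p" "p \<le> 1" "f p = 1" and v: "0 \<le> v" "v \<le> 1"
  shows "fL f v = (if p \<le> v then 1 else f v)"
proof (rule antisym)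
  show "fL f v \<le> (if p \<le> v then 1 else f v)"
  proof (rule fL_least[OF v(1)])
    fix u assume u: "0 \<le> u" "u \<le> v"
    have "min (f u) (f p) \<le> f v" if "v < p" using NCFD_convex[of f u v p] f u that p by auto
    then show "f u \<le> (if p \<le> v then 1 else f v)" using NCFD_bounds[OF f, of u] u v p by auto
  qed
  show "(if p \<le> v then 1 else f v) \<le> fL f v"
    using fL_upper[OF f p(1), of v] fL_upper[OF f v(1), of v] p v by auto
qed

lemma fR_peak:
  assumes f: "f \<in> NCFD" and p: "0 \<le> p" "p \<le> 1" "f p = 1" and v: "0 \<le> v" "v \<le> 1"
  shows "fR f v = (if v \<le> p then 1 else f v)"
proof (rule antisym)
  show "fR f v \<le> (if v \<le> p then 1 else f v)"
  proof (rule fR_least[OF v(2)])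
    fix u assume u: "v \<le> u" "u \<le> 1"
    have "min (f p) (f u) \<le> f v" if "p < v" using NCFD_convex[of f p v u] f u that p by auto
    then show "f u \<le> (if v \<le> p then 1 else f v)" using NCFD_bounds[OF f, of u] u v p by auto
  qed
  show "(if v \<le> p then 1 else f v) \<le> fR f v"
    using fR_upper[OF f v(1), of p] fR_upper[OF f v(1), of v] p v by auto
qed

lemma fL_attained:
  assumes f: "f \<in> NCFD" and v: "0 \<le> v" "v \<le> 1"
  obtains u where "0 \<le> u" "u \<le> v" "f u = fL f v"
proof -
  obtain p where p: "0 \<le> p" "p \<le> 1" "f p = 1" using f by (rule NCFD_normalE)
  show ?thesis using that[of p] that[of v] fL_peak[OF f p v] v p by (cases "p \<le> v") auto
qed

lemma fR_attained:
  assumes f: "f \<in> NCFD" and v: "0 \<le> v" "v \<le> 1"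
  obtains u where "v \<le> u" "u \<le> 1" "f u = fR f v"
proof -
  obtain p where p: "0 \<le> p" "p \<le> 1" "f p = 1" using f by (rule NCFD_normalE)
  show ?thesis using that[of p] that[of v] fR_peak[OF f p v] v p by (cases "v \<le> p") auto
qed

lemma fL_bounds: "f \<in> NCFD \<Longrightarrow> 0 \<le> v \<Longrightarrow> v \<le> 1 \<Longrightarrow> 0 \<le> fL f v \<and> fL f v \<le> 1"
  by (metis NCFD_bounds fL_attained order_trans)

lemma fR_bounds: "f \<in> NCFD \<Longrightarrow> 0 \<le> v \<Longrightarrow> v \<le> 1 \<Longrightarrow> 0 \<le> fR f v \<and> fR f v \<le> 1"
  by (metis NCFD_bounds fR_attained order_trans)

lemma fL_mono: "f \<in> NCFD \<Longrightarrow> 0 \<le> u \<Longrightarrow> u \<le> v \<Longrightarrow> v \<le> 1 \<Longrightarrow> fL f u \<le> fL f v"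
  by (rule fL_least) (auto intro: fL_upper)

lemma fR_antimono: "f \<in> NCFD \<Longrightarrow> 0 \<le> u \<Longrightarrow> u \<le> v \<Longrightarrow> v \<le> 1 \<Longrightarrow> fR f v \<le> fR f u"
  by (rule fR_least) (auto intro: fR_upper)

lemma NCFD_eq_min_fL_fR:
  assumes f: "f \<in> NCFD" and v: "0 \<le> v" "v \<le> 1"
  shows "f v = min (fL f v) (fR f v)"
proof -
  obtain p where p: "0 \<le> p" "p \<le> 1" "f p = 1" using f by (rule NCFD_normalE)
  show ?thesis using fL_peak[OF f p v] fR_peak[OF f p v] NCFD_bounds[OF f v] p by auto
qed

lemma NCFD_eqI:
  assumes f: "f \<in> NCFD" and g: "g \<in> NCFD"
    and "\<And>v. 0 \<le> v \<Longrightarrow> v \<le> 1 \<Longrightarrow> fL f v = fL g v"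
    and "\<And>v. 0 \<le> v \<Longrightarrow> v \<le> 1 \<Longrightarrow> fR f v = fR g v"
  shows "f = g"
proof
  fix v show "f v = g v"
    using NCFD_eq_min_fL_fR[OF f] NCFD_eq_min_fL_fR[OF g] NCFD_zero[OF f] NCFD_zero[OF g] assms(3,4)
    by (cases "0 \<le> v \<and> v \<le> 1") auto
qed

lemma NCFD_of_envelopes:
  fixes L R :: fuzzy
  assumes h_def: "h = (\<lambda>v. if v \<in> unit_iv then min (L v) (R v) else 0)"
    and L: "\<And>u v. 0 \<le> u \<Longrightarrow> u \<le> v \<Longrightarrow> v \<le> 1 \<Longrightarrow> L u \<le> L v"
      "\<And>v. 0 \<le> v \<Longrightarrow> v \<le> 1 \<Longrightarrow> 0 \<le> L v \<and> L v \<le> 1"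
    and R: "\<And>u v. 0 \<le> u \<Longrightarrow> u \<le> v \<Longrightarrow> v \<le> 1 \<Longrightarrow> R v \<le> R u"
      "\<And>v. 0 \<le> v \<Longrightarrow> v \<le> 1 \<Longrightarrow> 0 \<le> R v \<and> R v \<le> 1"
    and r: "0 \<le> r" "r \<le> 1" "L r = 1" "R r = 1"
  shows "h \<in> NCFD"
    and "\<And>v. 0 \<le> v \<Longrightarrow> v \<le> 1 \<Longrightarrow> fL h v = L v"
    and "\<And>v. 0 \<le> v \<Longrightarrow> v \<le> 1 \<Longrightarrow> fR h v = R v"
proof -
  show h: "h \<in> NCFD"
    unfolding NCFD_def
  proof (intro CollectI conjI ballI allI impI)
    fix a b c :: real assume "a \<in> unit_iv" "b \<in> unit_iv" "c \<in> unit_iv" "a \<le> b \<and> b \<le> c"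
    then have "L a \<le> L b" "R c \<le> R b" "h a \<le> L a" "h c \<le> R c" "h b = min (L b) (R b)"
      using L(1)[of a b] R(1)[of b c] by (auto simp: h_def)
    then show "min (h a) (h c) \<le> h b" by linarith
  next
    show "\<exists>u\<in>unit_iv. h u = 1" using r by (auto simp: h_def intro!: bexI[of _ r])
  qed (use L(2) R(2) in \<open>auto simp: h_def min_le_iff_disj\<close>)
  fix v :: real assume v: "0 \<le> v" "v \<le> 1"
  show "fL h v = L v"
  proof (rule antisym)
    show "fL h v \<le> L v" by (rule fL_least) (use v L(1) in \<open>auto simp: h_def min_le_iff_disj\<close>)
    have "L v \<le> h r" if "r \<le> v" using that L r v by (force simp: h_def)
    moreover have "L v \<le> h v" if "v < r" using that R(1)[of v r] L(2)[OF v] r v by (auto simp: h_def)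
    ultimately show "L v \<le> fL h v" using fL_upper[OF h] r v by (meson linorder_not_le order_trans order_refl)
  qed
  show "fR h v = R v"
  proof (rule antisym)
    show "fR h v \<le> R v" by (rule fR_least) (use v R(1) in \<open>auto simp: h_def min_le_iff_disj\<close>)
    have "R v \<le> h r" if "v \<le> r" using that R r v by (force simp: h_def)
    moreover have "R v \<le> h v" if "r < v" using that L(1)[of r v] R(2)[OF v] r v by (auto simp: h_def)
    ultimately show "R v \<le> fR h v" using fR_upper[OF h] r v by (meson linorder_not_le order_trans order_refl)
  qed
qed

lemma fmeet_eq:
  assumes f: "f \<in> NCFD" and g: "g \<in> NCFD" and v: "0 \<le> v" "v \<le> 1"
  shows "fmeet f g v = max (min (f v) (fR g v)) (min (fR f v) (g v))"
proof -
  let ?S = "{min (f u) (g w) | u w. u \<in> unit_iv \<and> w \<in> unit_iv \<and> min u w = v}"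
  obtain w where w: "v \<le> w" "w \<le> 1" "g w = fR g v" using fR_attained[OF g v] .
  obtain u where u: "v \<le> u" "u \<le> 1" "f u = fR f v" using fR_attained[OF f v] .
  have mem: "min (f u) (g w) \<in> ?S" if "u \<in> unit_iv" "w \<in> unit_iv" "min u w = v" for u w
    using that by blast
  have "min (f v) (fR g v) \<in> ?S" "min (fR f v) (g v) \<in> ?S"
    using mem[of v w] mem[of u v] v u w by auto
  then have "max (min (f v) (fR g v)) (min (fR f v) (g v)) \<in> ?S"
    by (simp add: max_def)
  moreover have "x \<le> max (min (f v) (fR g v)) (min (fR f v) (g v))" if "x \<in> ?S" for x
  proof -
    obtain u w where uw: "0 \<le> u" "u \<le> 1" "0 \<le> w" "w \<le> 1" "min u w = v" "x = min (f u) (g w)"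
      using \<open>x \<in> ?S\<close> by auto
    show ?thesis
    proof (cases "u \<le> w")
      case True
      then show ?thesis using uw fR_upper[OF g, of v w] by auto
    next
      case False
      then show ?thesis using uw fR_upper[OF f, of v u] by auto
    qed
  qed
  ultimately have "Sup ?S = max (min (f v) (fR g v)) (min (fR f v) (g v))" by (rule cSup_eq_maximum)
  then show ?thesis using v by (simp add: fmeet_def)
qed

lemma fjoin_eq:
  assumes f: "f \<in> NCFD" and g: "g \<in> NCFD" and v: "0 \<le> v" "v \<le> 1"
  shows "fjoin f g v = max (min (f v) (fL g v)) (min (fL f v) (g v))"
proof -
  let ?S = "{min (f u) (g w) | u w. u \<in> unit_iv \<and> w \<in> unit_iv \<and> max u w = v}"
  obtain w where w: "0 \<le> w" "w \<le> v" "g w = fL g v" using fL_attained[OF g v] .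
  obtain u where u: "0 \<le> u" "u \<le> v" "f u = fL f v" using fL_attained[OF f v] .
  have mem: "min (f u) (g w) \<in> ?S" if "u \<in> unit_iv" "w \<in> unit_iv" "max u w = v" for u w
    using that by blast
  have "min (f v) (fL g v) \<in> ?S" "min (fL f v) (g v) \<in> ?S"
    using mem[of v w] mem[of u v] v u w by auto
  then have "max (min (f v) (fL g v)) (min (fL f v) (g v)) \<in> ?S"
    by (simp add: max_def)
  moreover have "x \<le> max (min (f v) (fL g v)) (min (fL f v) (g v))" if "x \<in> ?S" for x
  proof -
    obtain u w where uw: "0 \<le> u" "u \<le> 1" "0 \<le> w" "w \<le> 1" "max u w = v" "x = min (f u) (g w)"
      using \<open>x \<in> ?S\<close> by auto
    show ?thesis
    proof (cases "w \<le> u")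
      case True
      then show ?thesis using uw fL_upper[OF g, of w v] by auto
    next
      case False
      then show ?thesis using uw fL_upper[OF f, of u v] by auto
    qed
  qed
  ultimately have "Sup ?S = max (min (f v) (fL g v)) (min (fL f v) (g v))" by (rule cSup_eq_maximum)
  then show ?thesis using v by (simp add: fjoin_def)
qed

lemma fjoin_le_max:
  "f \<in> NCFD \<Longrightarrow> g \<in> NCFD \<Longrightarrow> 0 \<le> v \<Longrightarrow> v \<le> 1 \<Longrightarrow> fjoin f g v \<le> max (f v) (g v)"
  by (simp add: fjoin_eq max.coboundedI1 max.coboundedI2 min.coboundedI1 min.coboundedI2)

lemma fmeet_envelopes:
  assumes f: "f \<in> NCFD" and g: "g \<in> NCFD"
  shows "fmeet f g =
    (\<lambda>v. if v \<in> unit_iv then min (max (fL f v) (fL g v)) (min (fR f v) (fR g v)) else 0)"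
proof
  fix v show "fmeet f g v = (if v \<in> unit_iv then min (max (fL f v) (fL g v)) (min (fR f v) (fR g v)) else 0)"
    using fmeet_eq[OF f g, of v] NCFD_eq_min_fL_fR[OF f, of v] NCFD_eq_min_fL_fR[OF g, of v]
    by (auto simp: fmeet_def min_def max_def)
qed

lemma fjoin_envelopes:
  assumes f: "f \<in> NCFD" and g: "g \<in> NCFD"
  shows "fjoin f g =
    (\<lambda>v. if v \<in> unit_iv then min (min (fL f v) (fL g v)) (max (fR f v) (fR g v)) else 0)"
proof
  fix v show "fjoin f g v = (if v \<in> unit_iv then min (min (fL f v) (fL g v)) (max (fR f v) (fR g v)) else 0)"
    using fjoin_eq[OF f g, of v] NCFD_eq_min_fL_fR[OF f, of v] NCFD_eq_min_fL_fR[OF g, of v]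
    by (auto simp: fjoin_def min_def max_def)
qed

lemma fmeet_NCFD_envelopes:
  assumes f: "f \<in> NCFD" and g: "g \<in> NCFD"
  shows "fmeet f g \<in> NCFD"
    and "\<And>v. 0 \<le> v \<Longrightarrow> v \<le> 1 \<Longrightarrow> fL (fmeet f g) v = max (fL f v) (fL g v)"
    and "\<And>v. 0 \<le> v \<Longrightarrow> v \<le> 1 \<Longrightarrow> fR (fmeet f g) v = min (fR f v) (fR g v)"
proof -
  obtain p where p: "0 \<le> p" "p \<le> 1" "f p = 1" using f by (rule NCFD_normalE)
  obtain q where q: "0 \<le> q" "q \<le> 1" "g q = 1" using g by (rule NCFD_normalE)
  define r where "r = min p q"
  have r: "0 \<le> r" "r \<le> 1" "r \<le> p" "r \<le> q" using p q by (auto simp: r_def)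
  have Lr: "max (fL f r) (fL g r) = 1"
    using fL_peak[OF f p r(1,2)] fL_peak[OF g q r(1,2)] fL_bounds[OF f r(1,2)] fL_bounds[OF g r(1,2)]
    by (auto simp: r_def)
  have Rr: "min (fR f r) (fR g r) = 1"
    using fR_peak[OF f p r(1,2)] fR_peak[OF g q r(1,2)] r by simp
  have mono_L: "max (fL f u) (fL g u) \<le> max (fL f v) (fL g v)"
    and mono_R: "min (fR f v) (fR g v) \<le> min (fR f u) (fR g u)"
    if "0 \<le> u" "u \<le> v" "v \<le> 1" for u v
    using that fL_mono[OF f, of u v] fL_mono[OF g, of u v] fR_antimono[OF f, of u v] fR_antimono[OF g, of u v]
    by (auto simp: le_max_iff_disj min_le_iff_disj)
  have bounds_L: "0 \<le> max (fL f v) (fL g v) \<and> max (fL f v) (fL g v) \<le> 1"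
    and bounds_R: "0 \<le> min (fR f v) (fR g v) \<and> min (fR f v) (fR g v) \<le> 1"
    if "0 \<le> v" "v \<le> 1" for v
    using fL_bounds[OF f that] fL_bounds[OF g that] fR_bounds[OF f that] fR_bounds[OF g that]
    by (auto simp: le_max_iff_disj min_le_iff_disj)
  note envelopes = NCFD_of_envelopes[of "fmeet f g" "\<lambda>v. max (fL f v) (fL g v)" "\<lambda>v. min (fR f v) (fR g v)" r,
      OF fmeet_envelopes[OF f g] mono_L bounds_L mono_R bounds_R r(1,2) Lr Rr]
  show "fmeet f g \<in> NCFD" using envelopes(1) by simp
  show "fL (fmeet f g) v = max (fL f v) (fL g v)" if "0 \<le> v" "v \<le> 1" for v
    using envelopes(2) that by simp
  show "fR (fmeet f g) v = min (fR f v) (fR g v)" if "0 \<le> v" "v \<le> 1" for v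
    using envelopes(3) that by simp
qed

lemmas fmeet_NCFD = fmeet_NCFD_envelopes(1)
  and fL_fmeet = fmeet_NCFD_envelopes(2)
  and fR_fmeet = fmeet_NCFD_envelopes(3)

lemma fjoin_NCFD_envelopes:
  assumes f: "f \<in> NCFD" and g: "g \<in> NCFD"
  shows "fjoin f g \<in> NCFD"
    and "\<And>v. 0 \<le> v \<Longrightarrow> v \<le> 1 \<Longrightarrow> fL (fjoin f g) v = min (fL f v) (fL g v)"
    and "\<And>v. 0 \<le> v \<Longrightarrow> v \<le> 1 \<Longrightarrow> fR (fjoin f g) v = max (fR f v) (fR g v)"
proof -
  obtain p where p: "0 \<le> p" "p \<le> 1" "f p = 1" using f by (rule NCFD_normalE)
  obtain q where q: "0 \<le> q" "q \<le> 1" "g q = 1" using g by (rule NCFD_normalE)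
  define r where "r = max p q"
  have r: "0 \<le> r" "r \<le> 1" "p \<le> r" "q \<le> r" using p q by (auto simp: r_def)
  have Lr: "min (fL f r) (fL g r) = 1"
    using fL_peak[OF f p r(1,2)] fL_peak[OF g q r(1,2)] r by simp
  have Rr: "max (fR f r) (fR g r) = 1"
    using fR_peak[OF f p r(1,2)] fR_peak[OF g q r(1,2)] fR_bounds[OF f r(1,2)] fR_bounds[OF g r(1,2)]
    by (auto simp: r_def)
  have mono_L: "min (fL f u) (fL g u) \<le> min (fL f v) (fL g v)"
    and mono_R: "max (fR f v) (fR g v) \<le> max (fR f u) (fR g u)"
    if "0 \<le> u" "u \<le> v" "v \<le> 1" for u v
    using that fL_mono[OF f, of u v] fL_mono[OF g, of u v] fR_antimono[OF f, of u v] fR_antimono[OF g, of u v]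
    by (auto simp: le_max_iff_disj min_le_iff_disj)
  have bounds_L: "0 \<le> min (fL f v) (fL g v) \<and> min (fL f v) (fL g v) \<le> 1"
    and bounds_R: "0 \<le> max (fR f v) (fR g v) \<and> max (fR f v) (fR g v) \<le> 1"
    if "0 \<le> v" "v \<le> 1" for v
    using fL_bounds[OF f that] fL_bounds[OF g that] fR_bounds[OF f that] fR_bounds[OF g that]
    by (auto simp: le_max_iff_disj min_le_iff_disj)
  note envelopes = NCFD_of_envelopes[of "fjoin f g" "\<lambda>v. min (fL f v) (fL g v)" "\<lambda>v. max (fR f v) (fR g v)" r,
      OF fjoin_envelopes[OF f g] mono_L bounds_L mono_R bounds_R r(1,2) Lr Rr]
  show "fjoin f g \<in> NCFD" using envelopes(1) by simp
  show "fL (fjoin f g) v = min (fL f v) (fL g v)" if "0 \<le> v" "v \<le> 1" for v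
    using envelopes(2) that by simp
  show "fR (fjoin f g) v = max (fR f v) (fR g v)" if "0 \<le> v" "v \<le> 1" for v
    using envelopes(3) that by simp
qed

lemmas fjoin_NCFD = fjoin_NCFD_envelopes(1)
  and fL_fjoin = fjoin_NCFD_envelopes(2)
  and fR_fjoin = fjoin_NCFD_envelopes(3)

lemma fle_iff:
  assumes f: "f \<in> NCFD" and g: "g \<in> NCFD"
  shows "fle f g \<longleftrightarrow> (\<forall>v. 0 \<le> v \<and> v \<le> 1 \<longrightarrow> fL g v \<le> fL f v \<and> fR f v \<le> fR g v)"
proof
  assume "fle f g"
  then have "fmeet f g = f" by (simp add: fle_def)
  then show "\<forall>v. 0 \<le> v \<and> v \<le> 1 \<longrightarrow> fL g v \<le> fL f v \<and> fR f v \<le> fR g v"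
    using fL_fmeet[OF f g] fR_fmeet[OF f g] by (metis max.cobounded2 min.cobounded2)
next
  assume "\<forall>v. 0 \<le> v \<and> v \<le> 1 \<longrightarrow> fL g v \<le> fL f v \<and> fR f v \<le> fR g v"
  then have "fmeet f g = f"
    by (intro NCFD_eqI fmeet_NCFD f g) (auto simp: fL_fmeet[OF f g] fR_fmeet[OF f g])
  then show "fle f g" by (simp add: fle_def)
qed

lemmas envelope_simps = fle_iff fmeet_NCFD fL_fmeet fR_fmeet fjoin_NCFD fL_fjoin fR_fjoin

lemma fle_trans: "f \<in> NCFD \<Longrightarrow> g \<in> NCFD \<Longrightarrow> h \<in> NCFD \<Longrightarrow> fle f g \<Longrightarrow> fle g h \<Longrightarrow> fle f h"
  by (simp add: fle_iff) (meson order_trans)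

lemma fle_antisym: "f \<in> NCFD \<Longrightarrow> g \<in> NCFD \<Longrightarrow> fle f g \<Longrightarrow> fle g f \<Longrightarrow> f = g"
  by (rule NCFD_eqI) (auto simp: fle_iff intro: antisym)

lemma fmeet_lower1: "f \<in> NCFD \<Longrightarrow> g \<in> NCFD \<Longrightarrow> fle (fmeet f g) f"
  and fmeet_lower2: "f \<in> NCFD \<Longrightarrow> g \<in> NCFD \<Longrightarrow> fle (fmeet f g) g"
  and fjoin_upper1: "f \<in> NCFD \<Longrightarrow> g \<in> NCFD \<Longrightarrow> fle f (fjoin f g)"
  and fjoin_upper2: "f \<in> NCFD \<Longrightarrow> g \<in> NCFD \<Longrightarrow> fle g (fjoin f g)"
  by (auto simp: envelope_simps)

lemma fmeet_greatest: "f \<in> NCFD \<Longrightarrow> g \<in> NCFD \<Longrightarrow> h \<in> NCFD \<Longrightarrow> fle h f \<Longrightarrow> fle h g \<Longrightarrow> fle h (fmeet f g)"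
  by (auto simp: envelope_simps)

lemma fjoin_least: "f \<in> NCFD \<Longrightarrow> g \<in> NCFD \<Longrightarrow> h \<in> NCFD \<Longrightarrow> fle f h \<Longrightarrow> fle g h \<Longrightarrow> fle (fjoin f g) h"
  by (auto simp: envelope_simps)

lemma fmeet_assoc:
  "f \<in> NCFD \<Longrightarrow> g \<in> NCFD \<Longrightarrow> h \<in> NCFD \<Longrightarrow> fmeet (fmeet f g) h = fmeet f (fmeet g h)"
  by (rule NCFD_eqI) (auto simp: envelope_simps max.assoc min.assoc)

lemma fmeet_fjoin_le:
  assumes "a \<in> NCFD" "b \<in> NCFD" "c \<in> NCFD" "a' \<in> NCFD" "b' \<in> NCFD"
    and "fle (fmeet a c) a'" "fle (fmeet b c) b'"
  shows "fle (fmeet (fjoin a b) c) (fjoin a' b')"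
  using assms by (auto simp: envelope_simps) (smt (verit))+

lemma fmeet_fmeet_le:
  assumes "a \<in> NCFD" "b \<in> NCFD" "c \<in> NCFD" "a' \<in> NCFD" "b' \<in> NCFD"
    and "fle (fmeet a c) a'" "fle (fmeet b c) b'"
  shows "fle (fmeet (fmeet a b) c) (fmeet a' b')"
  using assms by (auto simp: envelope_simps)

lemma unit_family_Sup_Inf:
  fixes x :: "'i \<Rightarrow> real"
  assumes "\<forall>i. 0 \<le> x i \<and> x i \<le> 1"
  shows "x i \<le> Sup (range x)" "Inf (range x) \<le> x i"
    "0 \<le> Sup (range x)" "Sup (range x) \<le> 1" "0 \<le> Inf (range x)" "Inf (range x) \<le> 1"
proof -
  have "bdd_above (range x)" "bdd_below (range x)"
    using assms by (auto intro!: bdd_aboveI[of _ 1] bdd_belowI[of _ 0])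
  then show upper: "\<And>i. x i \<le> Sup (range x)" and lower: "\<And>i. Inf (range x) \<le> x i"
    by (auto intro: cSUP_upper cINF_lower)
  show "0 \<le> Sup (range x)" "Inf (range x) \<le> 1"
    using upper[of undefined] lower[of undefined] assms by (meson order_trans)+
  show "Sup (range x) \<le> 1" "0 \<le> Inf (range x)"
    using assms by (auto intro: cSUP_least cINF_greatest)
qed

lemma NCFD_family_bounds:
  "\<forall>i. F i \<in> NCFD \<Longrightarrow> \<forall>i. 0 \<le> x i \<and> x i \<le> 1 \<Longrightarrow> \<forall>i. 0 \<le> F i (x i) \<and> F i (x i) \<le> 1"
  by (simp add: NCFD_bounds)

lemma NCFD_family_peaksE:
  assumes "\<forall>i. F i \<in> NCFD"
  obtains p where "\<forall>i. 0 \<le> p i \<and> p i \<le> 1 \<and> F i (p i) = 1"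
proof -
  have "\<forall>i. \<exists>p. 0 \<le> p \<and> p \<le> 1 \<and> F i p = 1" by (metis assms NCFD_normalE)
  then show ?thesis using that by metis
qed

lemma fJoin_upper:
  fixes F :: "'i \<Rightarrow> fuzzy"
  assumes F: "\<forall>i. F i \<in> NCFD" and x: "\<forall>i. 0 \<le> x i \<and> x i \<le> 1"
  shows "Inf (range (\<lambda>i. F i (x i))) \<le> fJoin F (Sup (range x))"
proof -
  let ?S = "{Inf (range (\<lambda>i. F i (y i))) | y. (\<forall>i. y i \<in> unit_iv) \<and> Sup (range y) = Sup (range x)}"
  have "bdd_above ?S"
  proof (rule bdd_aboveI[of _ 1], clarify)
    fix y :: "'i \<Rightarrow> real" assume "\<forall>i. y i \<in> unit_iv"
    then show "Inf (range (\<lambda>i. F i (y i))) \<le> 1"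
      using unit_family_Sup_Inf(6)[OF NCFD_family_bounds[OF F]] by simp
  qed
  then have "Inf (range (\<lambda>i. F i (x i))) \<le> Sup ?S"
    using x by (intro cSup_upper) auto
  then show ?thesis using unit_family_Sup_Inf(3,4)[OF x] by (simp add: fJoin_def)
qed

lemma fJoin_least:
  assumes "0 \<le> v" "v \<le> 1"
    and "\<And>x. \<forall>i. 0 \<le> x i \<and> x i \<le> 1 \<Longrightarrow> Sup (range x) = v \<Longrightarrow> Inf (range (\<lambda>i. F i (x i))) \<le> c"
  shows "fJoin F v \<le> c"
proof -
  have "Sup {Inf (range (\<lambda>i. F i (x i))) | x. (\<forall>i. x i \<in> unit_iv) \<and> Sup (range x) = v} \<le> c"
    by (rule cSup_least) (use assms in \<open>auto intro!: exI[of _ "\<lambda>_. v"]\<close>)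
  then show ?thesis using assms(1,2) by (simp add: fJoin_def)
qed

lemma fJoin_gtE:
  assumes "0 \<le> v" "v \<le> 1" "c < fJoin F v"
  obtains x where "\<forall>i. 0 \<le> x i \<and> x i \<le> 1" "Sup (range x) = v" "c < Inf (range (\<lambda>i. F i (x i)))"
proof -
  have "\<not> (\<forall>x. (\<forall>i. 0 \<le> x i \<and> x i \<le> 1) \<longrightarrow> Sup (range x) = v \<longrightarrow> Inf (range (\<lambda>i. F i (x i))) \<le> c)"
    using fJoin_least[of v F c] assms by force
  then show ?thesis using that by (auto simp: not_le)
qed

lemma Sup_range_splice:
  fixes x y :: "'i \<Rightarrow> real"
  assumes x: "\<forall>i. 0 \<le> x i \<and> x i \<le> 1" and y: "\<forall>i. 0 \<le> y i \<and> y i \<le> 1"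
    and "Sup (range x) \<le> b" "b \<le> Sup (range y)"
  shows "Sup (range (\<lambda>i. max (x i) (min (y i) b))) = b"
proof (rule antisym)
  show "Sup (range (\<lambda>i. max (x i) (min (y i) b))) \<le> b"
  proof (rule cSUP_least)
    fix i show "max (x i) (min (y i) b) \<le> b" using unit_family_Sup_Inf(1)[OF x, of i] assms(3) by auto
  qed simp
  have z: "\<forall>i. 0 \<le> max (x i) (min (y i) b) \<and> max (x i) (min (y i) b) \<le> 1"
    using x y by (auto simp: le_max_iff_disj min_le_iff_disj)
  show "b \<le> Sup (range (\<lambda>i. max (x i) (min (y i) b)))"
  proof (rule ccontr)
    define S where "S = Sup (range (\<lambda>i. max (x i) (min (y i) b)))"
    assume "\<not> b \<le> Sup (range (\<lambda>i. max (x i) (min (y i) b)))"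
    then have less: "S < b" by (simp add: S_def)
    have "y i \<le> S" for i
    proof -
      have "min (y i) b \<le> S" using unit_family_Sup_Inf(1)[OF z, of i] by (simp add: S_def)
      then show ?thesis using less by (simp add: min_def split: if_splits)
    qed
    then have "Sup (range y) \<le> S" by (intro cSUP_least) simp_all
    then show False using assms(4) less by linarith
  qed
qed

lemma fJoin_bounds:
  fixes F :: "'i \<Rightarrow> fuzzy"
  assumes F: "\<forall>i. F i \<in> NCFD" and v: "0 \<le> v" "v \<le> 1"
  shows "0 \<le> fJoin F v" "fJoin F v \<le> 1"
proof -
  have "0 \<le> Inf (range (\<lambda>i. F i v))"
    using unit_family_Sup_Inf(5)[OF NCFD_family_bounds[OF F, of "\<lambda>_. v"]] v by simp
  also have "\<dots> \<le> fJoin F v" using fJoin_upper[OF F, of "\<lambda>_. v"] v by simp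
  finally show "0 \<le> fJoin F v" .
  show "fJoin F v \<le> 1"
  proof (rule fJoin_least[OF v])
    fix x :: "'i \<Rightarrow> real" assume "\<forall>i. 0 \<le> x i \<and> x i \<le> 1"
    then show "Inf (range (\<lambda>i. F i (x i))) \<le> 1"
      by (rule unit_family_Sup_Inf(6)[OF NCFD_family_bounds[OF F]])
  qed
qed

lemma fJoin_convex:
  fixes F :: "'i \<Rightarrow> fuzzy"
  assumes F: "\<forall>i. F i \<in> NCFD" and abc: "0 \<le> a" "a \<le> b" "b \<le> c" "c \<le> 1"
  shows "min (fJoin F a) (fJoin F c) \<le> fJoin F b"
proof (rule ccontr)
  assume "\<not> ?thesis"
  then have less: "fJoin F b < fJoin F a" "fJoin F b < fJoin F c" by auto
  obtain x where
    x: "\<forall>i. 0 \<le> x i \<and> x i \<le> 1" "Sup (range x) = a" "fJoin F b < Inf (range (\<lambda>i. F i (x i)))"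
    by (rule fJoin_gtE[of a]) (use abc less in auto)
  obtain y where
    y: "\<forall>i. 0 \<le> y i \<and> y i \<le> 1" "Sup (range y) = c" "fJoin F b < Inf (range (\<lambda>i. F i (y i)))"
    by (rule fJoin_gtE[of c]) (use abc less in auto)
  \<comment> \<open>The splice \<open>z\<close> equals \<open>x\<close> or lies between \<open>x\<close> and \<open>y\<close>, and has supremum \<open>b\<close>.\<close>
  define z where "z i = max (x i) (min (y i) b)" for i
  have z: "\<forall>i. 0 \<le> z i \<and> z i \<le> 1"
    using x(1) y(1) abc by (auto simp: z_def le_max_iff_disj min_le_iff_disj)
  have "Sup (range z) = b"
    unfolding z_def by (rule Sup_range_splice) (use x y abc in auto)
  have Fz: "min (F i (x i)) (F i (y i)) \<le> F i (z i)" for i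
  proof (cases "x i \<le> min (y i) b")
    case True
    then show ?thesis
      using NCFD_convex[of "F i" "x i" "z i" "y i"] F x(1) y(1) by (auto simp: z_def)
  next
    case False
    then have "z i = x i" by (auto simp: z_def max_def)
    then show ?thesis by simp
  qed
  have "min (Inf (range (\<lambda>i. F i (x i)))) (Inf (range (\<lambda>i. F i (y i)))) \<le> Inf (range (\<lambda>i. F i (z i)))"
  proof (rule cINF_greatest)
    fix i
    have "Inf (range (\<lambda>i. F i (x i))) \<le> F i (x i)" "Inf (range (\<lambda>i. F i (y i))) \<le> F i (y i)"
      using unit_family_Sup_Inf(2)[OF NCFD_family_bounds[OF F x(1)]]
        unit_family_Sup_Inf(2)[OF NCFD_family_bounds[OF F y(1)]] by auto
    then show "min (Inf (range (\<lambda>i. F i (x i)))) (Inf (range (\<lambda>i. F i (y i)))) \<le> F i (z i)"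
      using Fz[of i] by linarith
  qed simp
  also have "\<dots> \<le> fJoin F b" using fJoin_upper[OF F z] \<open>Sup (range z) = b\<close> by simp
  finally show False using x(3) y(3) by linarith
qed

lemma fJoin_NCFD:
  fixes F :: "'i \<Rightarrow> fuzzy"
  assumes F: "\<forall>i. F i \<in> NCFD"
  shows "fJoin F \<in> NCFD"
  unfolding NCFD_def
proof (intro CollectI conjI ballI allI impI)
  fix u :: real assume "u \<notin> unit_iv"
  then show "fJoin F u = 0" unfolding fJoin_def by (simp del: in_unit_iv_iff)
next
  fix u :: real assume "u \<in> unit_iv"
  then show "0 \<le> fJoin F u" "fJoin F u \<le> 1" using fJoin_bounds[OF F] by auto
next
  obtain p where p: "\<forall>i. 0 \<le> p i \<and> p i \<le> 1 \<and> F i (p i) = 1" using F by (rule NCFD_family_peaksE)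
  then have p01: "\<forall>i. 0 \<le> p i \<and> p i \<le> 1" by simp
  have "1 \<le> fJoin F (Sup (range p))" using fJoin_upper[OF F p01] p by simp
  then show "\<exists>u\<in>unit_iv. fJoin F u = 1"
    using unit_family_Sup_Inf(3,4)[OF p01] fJoin_bounds[OF F] by (intro bexI[of _ "Sup (range p)"]) force+
next
  fix a b c :: real
  assume "a \<in> unit_iv" "b \<in> unit_iv" "c \<in> unit_iv" "a \<le> b \<and> b \<le> c"
  then show "min (fJoin F a) (fJoin F c) \<le> fJoin F b" using fJoin_convex[OF F] by simp
qed

lemma fJoin_Inf_le_fR:
  fixes F :: "'i \<Rightarrow> fuzzy"
  assumes F: "\<forall>i. F i \<in> NCFD" and x: "\<forall>i. 0 \<le> x i \<and> x i \<le> 1"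
    and "0 \<le> v" "v \<le> Sup (range x)"
  shows "Inf (range (\<lambda>i. F i (x i))) \<le> fR (fJoin F) v"
  using fJoin_upper[OF F x] fR_upper[OF fJoin_NCFD[OF F], of v "Sup (range x)"]
    unit_family_Sup_Inf(4)[OF x] assms(3,4) by linarith

lemma fL_fJoin:
  fixes F :: "'i \<Rightarrow> fuzzy"
  assumes F: "\<forall>i. F i \<in> NCFD" and v: "0 \<le> v" "v \<le> 1"
  shows "fL (fJoin F) v = Inf (range (\<lambda>i. fL (F i) v))"
proof (rule antisym)
  show "fL (fJoin F) v \<le> Inf (range (\<lambda>i. fL (F i) v))"
  proof (rule fL_least[OF v(1)])
    fix u assume u: "0 \<le> u" "u \<le> v"
    show "fJoin F u \<le> Inf (range (\<lambda>i. fL (F i) v))"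
    proof (rule fJoin_least)
      fix x :: "'i \<Rightarrow> real" assume x: "\<forall>i. 0 \<le> x i \<and> x i \<le> 1" "Sup (range x) = u"
      show "Inf (range (\<lambda>i. F i (x i))) \<le> Inf (range (\<lambda>i. fL (F i) v))"
      proof (rule cINF_greatest)
        fix i
        have "Inf (range (\<lambda>i. F i (x i))) \<le> F i (x i)"
          by (rule unit_family_Sup_Inf(2)[OF NCFD_family_bounds[OF F x(1)]])
        also have "\<dots> \<le> fL (F i) v"
          using fL_upper[of "F i" "x i" v] F x unit_family_Sup_Inf(1)[OF x(1), of i] u v by auto
        finally show "Inf (range (\<lambda>i. F i (x i))) \<le> fL (F i) v" .
      qed simp
    qed (use u v in auto)
  qed
  obtain p where p: "\<forall>i. 0 \<le> p i \<and> p i \<le> 1 \<and> F i (p i) = 1" using F by (rule NCFD_family_peaksE)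
  define x where "x i = min v (p i)" for i
  have x: "\<forall>i. 0 \<le> x i \<and> x i \<le> 1" using p v by (simp add: x_def min_le_iff_disj)
  have "Sup (range x) \<le> v" by (rule cSUP_least) (simp_all add: x_def)
  have "fL (F i) v = F i (x i)" for i
    using fL_peak[of "F i" "p i" v] F p v by (auto simp: x_def min_def)
  then have "Inf (range (\<lambda>i. fL (F i) v)) \<le> fJoin F (Sup (range x))"
    using fJoin_upper[OF F x] by simp
  also have "\<dots> \<le> fL (fJoin F) v"
    using fL_upper[OF fJoin_NCFD[OF F]] unit_family_Sup_Inf(3)[OF x] \<open>Sup (range x) \<le> v\<close> v by simp
  finally show "Inf (range (\<lambda>i. fL (F i) v)) \<le> fL (fJoin F) v" .
qed

lemma fle_fJoin:
  fixes F :: "'i \<Rightarrow> fuzzy"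
  assumes F: "\<forall>i. F i \<in> NCFD"
  shows "fle (F j) (fJoin F)"
  unfolding fle_iff[OF spec[OF F] fJoin_NCFD[OF F]]
proof (intro allI impI conjI)
  fix v :: real assume v: "0 \<le> v \<and> v \<le> 1"
  have "\<forall>i. 0 \<le> fL (F i) v \<and> fL (F i) v \<le> 1" using F v fL_bounds by blast
  then show "fL (fJoin F) v \<le> fL (F j) v"
    using fL_fJoin[OF F] v unit_family_Sup_Inf(2) by simp
  obtain p where p: "\<forall>i. 0 \<le> p i \<and> p i \<le> 1 \<and> F i (p i) = 1" using F by (rule NCFD_family_peaksE)
  show "fR (F j) v \<le> fR (fJoin F) v"
  proof (rule fR_least)
    fix u assume u: "v \<le> u" "u \<le> 1"
    define x where "x = p(j := u)"
    have x: "\<forall>i. 0 \<le> x i \<and> x i \<le> 1" using p u v by (simp add: x_def)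
    have "F j u \<le> Inf (range (\<lambda>i. F i (x i)))"
      by (rule cINF_greatest) (use p NCFD_bounds[of "F j" u] F u v in \<open>auto simp: x_def\<close>)
    also have "\<dots> \<le> fR (fJoin F) v"
      using fJoin_Inf_le_fR[OF F x] unit_family_Sup_Inf(1)[OF x, of j] u v by (simp add: x_def)
    finally show "F j u \<le> fR (fJoin F) v" .
  qed (use v in auto)
qed

lemma fJoin_mono:
  fixes F H :: "'i \<Rightarrow> fuzzy"
  assumes F: "\<forall>i. F i \<in> NCFD" and H: "\<forall>i. H i \<in> NCFD" and le: "\<forall>i. fle (F i) (H i)"
  shows "fle (fJoin F) (fJoin H)"
  unfolding fle_iff[OF fJoin_NCFD[OF F] fJoin_NCFD[OF H]]
proof (intro allI impI conjI)
  fix v :: real assume v: "0 \<le> v \<and> v \<le> 1"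
  have le_v: "fL (H i) v \<le> fL (F i) v" for i
    using le fle_iff F H v by blast
  have "\<forall>i. 0 \<le> fL (H i) v \<and> fL (H i) v \<le> 1" using H v fL_bounds by blast
  then have "Inf (range (\<lambda>i. fL (H i) v)) \<le> Inf (range (\<lambda>i. fL (F i) v))"
    using le_v by (intro cINF_greatest) (auto intro: order_trans[OF unit_family_Sup_Inf(2)])
  then show "fL (fJoin H) v \<le> fL (fJoin F) v"
    using fL_fJoin[OF F] fL_fJoin[OF H] v by simp
  obtain q where q: "\<forall>i. 0 \<le> q i \<and> q i \<le> 1 \<and> H i (q i) = 1" using H by (rule NCFD_family_peaksE)
  show "fR (fJoin F) v \<le> fR (fJoin H) v"
  proof (rule fR_least)
    fix u assume u: "v \<le> u" "u \<le> 1"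
    show "fJoin F u \<le> fR (fJoin H) v"
    proof (rule fJoin_least)
      fix x :: "'i \<Rightarrow> real" assume x: "\<forall>i. 0 \<le> x i \<and> x i \<le> 1" "Sup (range x) = u"
      define z where "z i = max (x i) (q i)" for i
      have z: "\<forall>i. 0 \<le> z i \<and> z i \<le> 1" using x(1) q by (simp add: z_def le_max_iff_disj)
      have "F i (x i) \<le> H i (z i)" for i
      proof (cases "x i \<le> q i")
        case True then show ?thesis using q NCFD_bounds[of "F i" "x i"] F x by (simp add: z_def)
      next
        case False
        then have "H i (z i) = fR (H i) (x i)"
          using fR_peak[of "H i" "q i" "x i"] q H x by (auto simp: z_def)
        moreover have "fR (F i) (x i) \<le> fR (H i) (x i)" using le fle_iff F H x by blast
        moreover have "F i (x i) \<le> fR (F i) (x i)" using fR_upper[of "F i" "x i" "x i"] F x by simp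
        ultimately show ?thesis by simp
      qed
      then have "Inf (range (\<lambda>i. F i (x i))) \<le> Inf (range (\<lambda>i. H i (z i)))"
        using unit_family_Sup_Inf(2)[OF NCFD_family_bounds[OF F x(1)]]
        by (intro cINF_greatest) (auto intro: order_trans)
      also have "\<dots> \<le> fR (fJoin H) v"
      proof (rule fJoin_Inf_le_fR[OF H z])
        have "Sup (range x) \<le> Sup (range z)"
          using unit_family_Sup_Inf(1)[OF z] by (intro cSUP_least) (auto simp: z_def)
        then show "v \<le> Sup (range z)" using x u by auto
      qed (use v in auto)
      finally show "Inf (range (\<lambda>i. F i (x i))) \<le> fR (fJoin H) v" .
    qed (use u v in auto)
  qed (use v in auto)
qed

lemma Sup_range_le_max:
  fixes x y z :: "'i \<Rightarrow> real"
  assumes "\<forall>i. 0 \<le> y i \<and> y i \<le> 1" "\<forall>i. 0 \<le> z i \<and> z i \<le> 1"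
    and "\<And>i. x i \<le> y i \<or> x i \<le> z i"
  shows "Sup (range x) \<le> max (Sup (range y)) (Sup (range z))"
proof (rule cSUP_least)
  fix i show "x i \<le> max (Sup (range y)) (Sup (range z))"
    using assms(3)[of i] unit_family_Sup_Inf(1)[OF assms(1), of i] unit_family_Sup_Inf(1)[OF assms(2), of i]
    by linarith
qed simp

text \<open>Unlike \<open>fL\<close> (see \<open>fL_fJoin\<close>), \<open>fR\<close> of an infinite join is in general not the
  supremum of the \<open>fR (F i)\<close>, because the supremum of the points need not be attained.
  Instead, a family realising height \<open>\<alpha>\<close> for the joins \<open>F i \<squnion> H i\<close> is split, index by
  index, into a family realising \<open>\<alpha>\<close> for the \<open>F i\<close> and one for the \<open>H i\<close>, filling the
  gaps with peaks; one of the two reaches up to \<open>v\<close>.\<close>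

lemma fR_fJoin_fjoin_le:
  fixes F H :: "'i \<Rightarrow> fuzzy"
  assumes F: "\<forall>i. F i \<in> NCFD" and H: "\<forall>i. H i \<in> NCFD" and v: "0 \<le> v" "v \<le> 1"
  shows "fR (fJoin (\<lambda>i. fjoin (F i) (H i))) v \<le> max (fR (fJoin F) v) (fR (fJoin H) v)"
proof (rule fR_least[OF v(2)])
  obtain pF where pF: "\<forall>i. 0 \<le> pF i \<and> pF i \<le> 1 \<and> F i (pF i) = 1" using F by (rule NCFD_family_peaksE)
  obtain pH where pH: "\<forall>i. 0 \<le> pH i \<and> pH i \<le> 1 \<and> H i (pH i) = 1" using H by (rule NCFD_family_peaksE)
  have J: "\<forall>i. fjoin (F i) (H i) \<in> NCFD" using F H by (simp add: fjoin_NCFD)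
  fix u assume u: "v \<le> u" "u \<le> 1"
  show "fJoin (\<lambda>i. fjoin (F i) (H i)) u \<le> max (fR (fJoin F) v) (fR (fJoin H) v)"
  proof (rule fJoin_least)
    fix x :: "'i \<Rightarrow> real" assume x: "\<forall>i. 0 \<le> x i \<and> x i \<le> 1" "Sup (range x) = u"
    define \<alpha> where "\<alpha> = Inf (range (\<lambda>i. fjoin (F i) (H i) (x i)))"
    have \<alpha>_le: "\<alpha> \<le> fjoin (F i) (H i) (x i)" for i
      unfolding \<alpha>_def by (rule unit_family_Sup_Inf(2)[OF NCFD_family_bounds[OF J x(1)]])
    have "\<alpha> \<le> 1" unfolding \<alpha>_def by (rule unit_family_Sup_Inf(6)[OF NCFD_family_bounds[OF J x(1)]])
    have split: "\<alpha> \<le> F i (x i) \<or> \<alpha> \<le> H i (x i)" for i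
      using \<alpha>_le[of i] fjoin_le_max[of "F i" "H i" "x i"] F H x(1) by (simp add: le_max_iff_disj) (meson order_trans)
    define y where "y i = (if \<alpha> \<le> F i (x i) then x i else pF i)" for i
    define z where "z i = (if \<alpha> \<le> H i (x i) then x i else pH i)" for i
    have y: "\<forall>i. 0 \<le> y i \<and> y i \<le> 1" using x(1) pF by (simp add: y_def)
    have z: "\<forall>i. 0 \<le> z i \<and> z i \<le> 1" using x(1) pH by (simp add: z_def)
    have "\<alpha> \<le> Inf (range (\<lambda>i. F i (y i)))" "\<alpha> \<le> Inf (range (\<lambda>i. H i (z i)))"
      using pF pH \<open>\<alpha> \<le> 1\<close> by (auto intro!: cINF_greatest simp: y_def z_def)
    moreover have "v \<le> max (Sup (range y)) (Sup (range z))"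
      using Sup_range_le_max[OF y z, of x] split x(2) u by (force simp: y_def z_def)
    ultimately show "\<alpha> \<le> max (fR (fJoin F) v) (fR (fJoin H) v)"
      using fJoin_Inf_le_fR[OF F y v(1)] fJoin_Inf_le_fR[OF H z v(1)] by (auto simp: le_max_iff_disj)
  qed (use u v in auto)
qed

lemma fJoin_fjoin_distrib:
  fixes F H :: "'i \<Rightarrow> fuzzy"
  assumes F: "\<forall>i. F i \<in> NCFD" and H: "\<forall>i. H i \<in> NCFD"
  shows "fJoin (\<lambda>i. fjoin (F i) (H i)) = fjoin (fJoin F) (fJoin H)"
proof -
  have J: "\<forall>i. fjoin (F i) (H i) \<in> NCFD" using F H by (simp add: fjoin_NCFD)
  have GF: "fJoin F \<in> NCFD" and GH: "fJoin H \<in> NCFD" using F H by (simp_all add: fJoin_NCFD)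
  have lower: "fle (fjoin (fJoin F) (fJoin H)) (fJoin (\<lambda>i. fjoin (F i) (H i)))"
    by (intro fjoin_least fJoin_mono GF GH fJoin_NCFD F H J allI fjoin_upper1 fjoin_upper2 spec[OF F] spec[OF H])
  have "fL (fjoin (fJoin F) (fJoin H)) v \<le> fL (fJoin (\<lambda>i. fjoin (F i) (H i))) v"
    if v: "0 \<le> v" "v \<le> 1" for v
  proof -
    have "min (fL (fJoin F) v) (fL (fJoin H) v) \<le> min (fL (F i) v) (fL (H i) v)" for i
      using fle_fJoin[OF F, of i] fle_fJoin[OF H, of i] v
      by (intro min.mono) (simp_all add: fle_iff spec[OF F] spec[OF H] GF GH)
    then show ?thesis
      using v by (simp add: fL_fJoin[OF J v] fL_fjoin GF GH spec[OF F] spec[OF H] cINF_greatest)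
  qed
  moreover have "fR (fJoin (\<lambda>i. fjoin (F i) (H i))) v \<le> fR (fjoin (fJoin F) (fJoin H)) v" if "0 \<le> v" "v \<le> 1" for v
    using fR_fJoin_fjoin_le[OF F H that] that by (simp add: fR_fjoin GF GH)
  ultimately have "fle (fJoin (\<lambda>i. fjoin (F i) (H i))) (fjoin (fJoin F) (fJoin H))"
    by (simp add: fle_iff fJoin_NCFD[OF J] fjoin_NCFD GF GH)
  then show ?thesis using lower by (intro fle_antisym fJoin_NCFD J fjoin_NCFD GF GH)
qed

lemma is_bflang_NCFD: "is_bflang K \<Longrightarrow> K s \<in> NCFD"
  by (simp add: is_bflang_def)

lemma pr_NCFD: "is_bflang K \<Longrightarrow> pr K s \<in> NCFD"
  unfolding pr_def by (rule fJoin_NCFD) (simp add: is_bflang_NCFD)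

lemma pr_bf_union:
  "is_bflang K1 \<Longrightarrow> is_bflang K2 \<Longrightarrow> pr (bf_union K1 K2) = bf_union (pr K1) (pr K2)"
  unfolding pr_def bf_union_def by (rule ext, rule fJoin_fjoin_distrib) (simp_all add: is_bflang_NCFD)

lemma pr_bf_inter_prefix_closed:
  assumes K1: "is_bflang K1" "pr K1 = K1" and K2: "is_bflang K2" "pr K2 = K2"
  shows "pr (bf_inter K1 K2) = bf_inter K1 K2"
proof
  fix s
  have N1: "\<forall>u. K1 (s @ u) \<in> NCFD" and N2: "\<forall>u. K2 (s @ u) \<in> NCFD"
    using K1 K2 by (simp_all add: is_bflang_NCFD)
  have N: "\<forall>u. fmeet (K1 (s @ u)) (K2 (s @ u)) \<in> NCFD" using N1 N2 by (simp add: fmeet_NCFD)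
  have J1: "fJoin (\<lambda>u. K1 (s @ u)) = K1 s" and J2: "fJoin (\<lambda>u. K2 (s @ u)) = K2 s"
    using K1(2) K2(2) by (simp_all add: pr_def fun_eq_iff)
  have "fle (fJoin (\<lambda>u. fmeet (K1 (s @ u)) (K2 (s @ u)))) (fmeet (K1 s) (K2 s))"
    by (intro fmeet_greatest fJoin_NCFD N is_bflang_NCFD K1 K2)
      (use fJoin_mono[OF N N1] fJoin_mono[OF N N2] fmeet_lower1 fmeet_lower2 N1 N2 J1 J2 in auto)
  moreover have "fle (fmeet (K1 s) (K2 s)) (fJoin (\<lambda>u. fmeet (K1 (s @ u)) (K2 (s @ u))))"
    using fle_fJoin[OF N, of "[]"] by simp
  ultimately show "pr (bf_inter K1 K2) s = bf_inter K1 K2 s"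
    unfolding pr_def bf_inter_def
    by (intro fle_antisym fJoin_NCFD N fmeet_NCFD is_bflang_NCFD K1 K2)
qed

lemma bf_controllable_bf_union:
  assumes Sig: "\<forall>\<sigma>. Sig_uc \<sigma> \<in> NCFD" and M: "is_bflang M"
    and K1: "is_bflang K1" "bf_controllable K1 M Sig_uc"
    and K2: "is_bflang K2" "bf_controllable K2 M Sig_uc"
  shows "bf_controllable (bf_union K1 K2) M Sig_uc"
  unfolding bf_controllable_def
proof (intro conjI allI)
  show "bf_subset (bf_union K1 K2) M"
    unfolding bf_subset_def bf_union_def
  proof
    fix s show "fle (fjoin (K1 s) (K2 s)) (M s)"
      using K1 K2 by (intro fjoin_least is_bflang_NCFD M) (simp_all add: bf_controllable_def bf_subset_def)
  qed
  fix s \<sigma>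
  let ?c = "fmeet (Sig_uc \<sigma>) (M (s @ [\<sigma>]))"
  have "?c \<in> NCFD" using Sig M by (simp add: fmeet_NCFD is_bflang_NCFD)
  have "fle (fmeet (pr K1 s) ?c) (pr K1 (s @ [\<sigma>]))" "fle (fmeet (pr K2 s) ?c) (pr K2 (s @ [\<sigma>]))"
    using K1 K2 Sig M by (simp_all add: bf_controllable_def fmeet_assoc pr_NCFD is_bflang_NCFD)
  then have "fle (fmeet (fjoin (pr K1 s) (pr K2 s)) ?c) (fjoin (pr K1 (s @ [\<sigma>])) (pr K2 (s @ [\<sigma>])))"
    using \<open>?c \<in> NCFD\<close> K1(1) K2(1) by (intro fmeet_fjoin_le pr_NCFD)
  moreover have "pr (bf_union K1 K2) t = fjoin (pr K1 t) (pr K2 t)" for t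
    using pr_bf_union[OF K1(1) K2(1)] by (simp add: bf_union_def)
  ultimately show "fle (fmeet (fmeet (pr (bf_union K1 K2) s) (Sig_uc \<sigma>)) (M (s @ [\<sigma>])))
      (pr (bf_union K1 K2) (s @ [\<sigma>]))"
    using K1(1) K2(1) Sig M by (simp add: fmeet_assoc fjoin_NCFD pr_NCFD is_bflang_NCFD)
qed

lemma bf_controllable_bf_inter:
  assumes Sig: "\<forall>\<sigma>. Sig_uc \<sigma> \<in> NCFD" and M: "is_bflang M"
    and K1: "is_bflang K1" "bf_controllable K1 M Sig_uc"
    and K2: "is_bflang K2" "bf_controllable K2 M Sig_uc"
    and pr_inter: "bf_inter (pr K1) (pr K2) = pr (bf_inter K1 K2)"
  shows "bf_controllable (bf_inter K1 K2) M Sig_uc"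
  unfolding bf_controllable_def
proof (intro conjI allI)
  show "bf_subset (bf_inter K1 K2) M"
    using K1 K2 M by (auto simp: bf_controllable_def bf_subset_def bf_inter_def
        intro: fle_trans[OF _ _ _ fmeet_lower1] fmeet_NCFD is_bflang_NCFD)
  fix s \<sigma>
  let ?c = "fmeet (Sig_uc \<sigma>) (M (s @ [\<sigma>]))"
  have "?c \<in> NCFD" using Sig M by (simp add: fmeet_NCFD is_bflang_NCFD)
  have "fle (fmeet (pr K1 s) ?c) (pr K1 (s @ [\<sigma>]))" "fle (fmeet (pr K2 s) ?c) (pr K2 (s @ [\<sigma>]))"
    using K1 K2 Sig M by (simp_all add: bf_controllable_def fmeet_assoc pr_NCFD is_bflang_NCFD)
  then have "fle (fmeet (fmeet (pr K1 s) (pr K2 s)) ?c) (fmeet (pr K1 (s @ [\<sigma>])) (pr K2 (s @ [\<sigma>])))"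
    using \<open>?c \<in> NCFD\<close> K1(1) K2(1) by (intro fmeet_fmeet_le pr_NCFD)
  moreover have "pr (bf_inter K1 K2) t = fmeet (pr K1 t) (pr K2 t)" for t
    using pr_inter by (simp add: bf_inter_def fun_eq_iff)
  ultimately show "fle (fmeet (fmeet (pr (bf_inter K1 K2) s) (Sig_uc \<sigma>)) (M (s @ [\<sigma>])))
      (pr (bf_inter K1 K2) (s @ [\<sigma>]))"
    using K1(1) K2(1) Sig M by (simp add: fmeet_assoc fmeet_NCFD pr_NCFD is_bflang_NCFD)
qed

theorem proposition5:
  fixes M K1 K2 :: "'a bflang" and Sig_uc :: "'a \<Rightarrow> fuzzy"
  assumes "\<forall>\<sigma>. Sig_uc \<sigma> \<in> NCFD"
    and "is_bflang M" and "pr M = M"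
    and "is_bflang K1" and "is_bflang K2"
  shows "(bf_controllable K1 M Sig_uc \<and> bf_controllable K2 M Sig_uc
            \<longrightarrow> bf_controllable (bf_union K1 K2) M Sig_uc)
     \<and> (pr K1 = K1 \<and> pr K2 = K2 \<longrightarrow> pr (bf_union K1 K2) = bf_union K1 K2)
     \<and> (bf_controllable K1 M Sig_uc \<and> bf_controllable K2 M Sig_uc
          \<and> bf_inter (pr K1) (pr K2) = pr (bf_inter K1 K2)
            \<longrightarrow> bf_controllable (bf_inter K1 K2) M Sig_uc)
     \<and> (pr K1 = K1 \<and> bf_controllable K1 M Sig_uc \<and> pr K2 = K2 \<and> bf_controllable K2 M Sig_uc
            \<longrightarrow> bf_inter (pr K1) (pr K2) = pr (bf_inter K1 K2)
                \<and> bf_controllable (bf_inter K1 K2) M Sig_uc)"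
  using bf_controllable_bf_union[OF assms(1,2)] pr_bf_union[OF assms(4,5)]
    bf_controllable_bf_inter[OF assms(1,2)] pr_bf_inter_prefix_closed[OF assms(4) _ assms(5)] assms(4,5)
  by metis

end
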